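(* Let $n\ge 0$ and for a permutation $\sigma=\sigma_1\cdots\sigma_n\in\mathfrak{S}_n$ let $\operatorname{inv}(\sigma)$, $\operatorname{iasc}(\sigma)$, $\operatorname{isol}(\sigma)$, $\operatorname{des}(\sigma)$ and $\operatorname{RLmin}(\sigma)$ be as defined in the context. Define the cycle $q$-inv-Roselle polynomials \[ F^{\mathrm{inv}}_n(q;x,y,z\mid\beta)=\sum_{\sigma\in\mathfrak{S}_n} q^{\operatorname{inv}(\sigma)}x^{\operatorname{iasc}(\sigma)}z^{\operatorname{isol}(\sigma)}y^{\operatorname{des}(\sigma)-1}\beta^{\operatorname{RLmin}(\sigma)}\quad(n\ge1),\qquad F^{\mathrm{inv}}_0=1. \] Then, as formal power series in $u$, \[ \sum_{n\ge 0}F^{\mathrm{inv}}_n(q;x,y,z\mid\beta)\frac{u^n}{(q;q)_n} =\prod_{k=0}^{\infty}\frac{1-x^{-1}y\,e_q\big((x-y)uq^{k+1}\big)}{1-\beta uq^k(z-y)-x^{-1}y\big(1+\beta uq^k(x-z)\big)\,e_q\big((x-y)uq^{k+1}\big)}. \]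
   Context: $\mathfrak{S}_n$ is the set of permutations of $\{1,\dots,n\}$, written in one-line notation $\sigma=\sigma_1\cdots\sigma_n$, with the convention $\sigma_0=\sigma_{n+1}=0$. For $0\le i\le n$, $i$ is a descent if $\sigma_i>\sigma_{i+1}$ and an ascent otherwise; $\operatorname{des}(\sigma)$ and $\operatorname{asc}(\sigma)$ are their numbers. $\operatorname{inv}(\sigma)=\#\{(i,j):1\le i<j\le n,\ \sigma_i>\sigma_j\}$. A right-to-left minimum of $\sigma$ is an entry $\sigma_i$ with $\sigma_i<\sigma_j$ for all $j>i$; $\operatorname{RLmin}(\sigma)$ is their number. Place a bar at the beginning of $\sigma$ and a bar immediately after each right-to-left minimum; an entry $\sigma_j$ is isolated if it is the only entry between two consecutive bars, and $\operatorname{isol}(\sigma)$ is the number of isolated entries. An index $0\le i\le n-1$ is a non-isolated ascent if $i$ is an ascent and $\sigma_{i+1}$ is not isolated; $\operatorname{iasc}(\sigma)$ is their number. Here $(q;q)_n=\prod_{i=1}^n(1-q^i)$ and $e_q(u)=\sum_{n\ge0}u^n/(q;q)_n$. *)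

theory Defs
  imports Complex_Main "HOL-Computational_Algebra.Formal_Power_Series"
    "HOL-Combinatorics.Multiset_Permutations"
begin

text \<open>A permutation of {1..n} is a list s (one-line notation, s_i = s!(i-1)).
  ent s i is s_i with the convention s_0 = s_(n+1) = 0.\<close>
definition ent :: "nat list \<Rightarrow> nat \<Rightarrow> nat" where
  "ent s i = (if 1 \<le> i \<and> i \<le> length s then s ! (i - 1) else 0)"

definition is_descent :: "nat list \<Rightarrow> nat \<Rightarrow> bool" where
  "is_descent s i \<longleftrightarrow> ent s i > ent s (Suc i)"

definition is_ascent :: "nat list \<Rightarrow> nat \<Rightarrow> bool" where
  "is_ascent s i \<longleftrightarrow> \<not> is_descent s i"

definition des :: "nat list \<Rightarrow> nat" where
  "des s = card {i. i \<le> length s \<and> is_descent s i}"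

definition inv :: "nat list \<Rightarrow> nat" where
  "inv s = card {(i, j). 1 \<le> i \<and> i < j \<and> j \<le> length s \<and> ent s i > ent s j}"

definition is_RLmin :: "nat list \<Rightarrow> nat \<Rightarrow> bool" where
  "is_RLmin s i \<longleftrightarrow> 1 \<le> i \<and> i \<le> length s \<and>
     (\<forall>j. i < j \<and> j \<le> length s \<longrightarrow> ent s i < ent s j)"

definition RLmin :: "nat list \<Rightarrow> nat" where
  "RLmin s = card {i. is_RLmin s i}"

text \<open>Bars: a bar at position 0 (beginning) and a bar immediately after each
  right-to-left minimum; "bar at position i" means a bar between s_i and s_(i+1).\<close>
definition bars :: "nat list \<Rightarrow> nat set" where
  "bars s = {0} \<union> {i. is_RLmin s i}"

text \<open>entry at position j is isolated iff it is the only entry between two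
  consecutive bars, i.e. there are bars at j-1 and at j\<close>
definition isolated :: "nat list \<Rightarrow> nat \<Rightarrow> bool" where
  "isolated s j \<longleftrightarrow> 1 \<le> j \<and> j \<le> length s \<and> j - 1 \<in> bars s \<and> j \<in> bars s"

definition isol :: "nat list \<Rightarrow> nat" where
  "isol s = card {j. isolated s j}"

definition iasc :: "nat list \<Rightarrow> nat" where
  "iasc s = card {i. i < length s \<and> is_ascent s i \<and> \<not> isolated s (Suc i)}"

definition qpoch :: "complex \<Rightarrow> nat \<Rightarrow> complex" where
  "qpoch q n = (\<Prod>i=1..n. 1 - q ^ i)"

definition Finv :: "complex \<Rightarrow> complex \<Rightarrow> complex \<Rightarrow> complex \<Rightarrow> complex \<Rightarrow> nat \<Rightarrow> complex" where
  "Finv q x y z b n = (if n = 0 then 1 else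
     (\<Sum>s\<in>permutations_of_set {1..n}.
        q ^ inv s * x ^ iasc s * z ^ isol s * y ^ (des s - 1) * b ^ RLmin s))"

definition eq_fps :: "complex \<Rightarrow> complex \<Rightarrow> complex fps" where
  "eq_fps q c = Abs_fps (\<lambda>n. c ^ n / qpoch q n)"

definition prod_factor :: "complex \<Rightarrow> complex \<Rightarrow> complex \<Rightarrow> complex \<Rightarrow> complex \<Rightarrow> nat \<Rightarrow> complex fps" where
  "prod_factor q x y z b k =
     (let E = eq_fps q ((x - y) * q ^ (k + 1)) in
      (1 - fps_const (y / x) * E) /
      (1 - fps_const (b * q ^ k * (z - y)) * fps_X
         - fps_const (y / x) * (1 + fps_const (b * q ^ k * (x - z)) * fps_X) * E))"

end

theory Submission
  imports Defs
begin

text \<open>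
  Cut a permutation of a finite set of positive integers at its smallest letter m, as w m t. Then m
  is a right-to-left minimum, the later ones are those of t, and inv, iasc, isol, des and RLmin all
  split into the statistic of t plus an explicit contribution of w. Summing over the letters of w gives
  F(n+1) = \<beta> \<Sum>_k [n, k]_q q^k W(k) F(n - k), where W(0) = z and W(k) = x y A(k), with A(k) the
  generating polynomial of inv and of the ascents and descents between consecutive letters.
  Expanding x^asc y^des along the sorted suffixes of w gives (x - y E(u)) A(u) = E(u) - 1 for the
  q-exponential generating function A(u) of the A(k), where E(u) = e_q((x - y) u). For the
  q-exponential generating function G(u) of the F(n) the recurrence reads
  G(u) - G(q u) = \<beta> u W(q u) G(u), and with the equation for A this becomes
  D_0(u) G(u) = N_0(u) G(q u), where N_k / D_k is the k-th factor of the product. Substituting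
  q^k u and iterating, G(u) = (\<Prod>_{k<K} N_k / D_k) G(q^K u); since |q| < 1, every coefficient of
  G(q^K u) except the constant term 1 tends to 0.
\<close>

section \<open>Permutation statistics via adjacent pairs\<close>

definition adj_count :: "('a \<Rightarrow> 'a \<Rightarrow> bool) \<Rightarrow> 'a list \<Rightarrow> nat" where
  "adj_count P xs = card {i. Suc i < length xs \<and> P (xs ! i) (xs ! Suc i)}"

lemma adj_count_Nil [simp]: "adj_count P [] = 0"
  and adj_count_singleton [simp]: "adj_count P [a] = 0"
  by (auto simp: adj_count_def)

lemma adj_count_Cons_Cons [simp]:
  "adj_count P (a # b # l) = of_bool (P a b) + adj_count P (b # l)"
proof -
  let ?I = "\<lambda>xs. {i. Suc i < length xs \<and> P (xs ! i) (xs ! Suc i)}"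
  have "?I (a # b # l) = {i. i = 0 \<and> P a b} \<union> Suc ` ?I (b # l)"
  proof (intro set_eqI iffI)
    fix i assume "i \<in> ?I (a # b # l)"
    then show "i \<in> {i. i = 0 \<and> P a b} \<union> Suc ` ?I (b # l)"
      by (cases i) auto
  qed auto
  moreover have "{i. i = 0 \<and> P a b} \<inter> Suc ` ?I (b # l) = {}"
    by auto
  ultimately show ?thesis
    unfolding adj_count_def by (simp add: card_Un_disjoint card_image)
qed

lemma adj_count_append_Cons:
  "adj_count P (xs @ y # ys) = adj_count P (xs @ [y]) + adj_count P (y # ys)"
proof (induction xs)
  case (Cons a xs)
  then show ?case by (cases xs) auto
qed simp

lemma adj_count_snoc:
  "l \<noteq> [] \<Longrightarrow> adj_count P (l @ [y]) = adj_count P l + of_bool (P (last l) y)"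
proof (induction l)
  case (Cons a l)
  then show ?case by (cases l) auto
qed simp

lemma adj_count_map: "adj_count P (map f l) = adj_count (\<lambda>a b. P (f a) (f b)) l"
  unfolding adj_count_def by (rule arg_cong[where f = card]) auto

lemma adj_count_Cons_cong:
  "(\<And>b. b \<in> set l \<Longrightarrow> P a b = P a' b) \<Longrightarrow> adj_count P (a # l) = adj_count P (a' # l)"
  by (cases l) auto

lemma adj_count_compl: "adj_count P l + adj_count (\<lambda>a b. \<not> P a b) l = length l - 1"
  by (induction l rule: induct_list012) auto

lemma adj_count_le_plus_greater:
  "adj_count (\<le>) l + adj_count (>) l = length l - 1" for l :: "'a::linorder list"
  using adj_count_compl[of "(>)" l] by (simp add: not_less add.commute)

lemma ent_conv_nth: "i \<le> Suc (length s) \<Longrightarrow> ent s i = (0 # s @ [0]) ! i"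
  unfolding ent_def by (cases i) (auto simp: nth_append)

lemma des_eq_adj_count: "des s = adj_count (>) (0 # s @ [0])"
  unfolding des_def adj_count_def is_descent_def
  by (rule arg_cong[where f = card]) (auto simp: ent_conv_nth)

lemma des_Nil [simp]: "des [] = 0"
  by (simp add: des_eq_adj_count)

lemma des_eq_adj_count_Cons_zero:
  assumes "0 \<notin> set w"
  shows "des w = adj_count (>) (0 # w) + of_bool (w \<noteq> [])"
proof -
  have "des w = adj_count (>) ((0 # w) @ [0])"
    by (simp add: des_eq_adj_count)
  also have "\<dots> = adj_count (>) (0 # w) + of_bool (0 < last (0 # w))"
    by (rule adj_count_snoc) simp
  also have "0 < last (0 # w) \<longleftrightarrow> w \<noteq> []"
    using assms by (metis gr0I last.simps last_in_set less_irrefl)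
  finally show ?thesis .
qed

lemma des_pos: "0 \<notin> set t \<Longrightarrow> t \<noteq> [] \<Longrightarrow> 0 < des t"
  using des_eq_adj_count_Cons_zero[of t] by simp

lemma is_RLmin_Suc_iff:
  "is_RLmin s (Suc k) \<longleftrightarrow> k < length s \<and> (\<forall>v\<in>set (drop (Suc k) s). s ! k < v)"
proof -
  have "set (drop (Suc k) s) = (\<lambda>j. s ! (j - 1)) ` {j. Suc k < j \<and> j \<le> length s}"
  proof (intro set_eqI iffI)
    fix v assume "v \<in> set (drop (Suc k) s)"
    then obtain i where "i < length s - Suc k" "v = s ! (Suc k + i)"
      by (auto simp: in_set_conv_nth)
    then show "v \<in> (\<lambda>j. s ! (j - 1)) ` {j. Suc k < j \<and> j \<le> length s}"
      by (intro image_eqI[where x = "Suc (Suc k + i)"]) auto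
  next
    fix v assume "v \<in> (\<lambda>j. s ! (j - 1)) ` {j. Suc k < j \<and> j \<le> length s}"
    then obtain j where "Suc k < j" "j \<le> length s" "v = s ! (j - 1)"
      by blast
    moreover obtain i where "j = Suc (Suc k) + i"
      using \<open>Suc k < j\<close> by (metis less_iff_Suc_add add_Suc)
    ultimately have "i < length (drop (Suc k) s)" "v = drop (Suc k) s ! i"
      by auto
    then show "v \<in> set (drop (Suc k) s)"
      by (simp only: nth_mem)
  qed
  then show ?thesis
    by (auto simp: is_RLmin_def ent_def)
qed

lemma RLmin_eq_card_bars: "RLmin s = card (bars s) - 1"
proof -
  have "finite {i. is_RLmin s i}" "0 \<notin> {i. is_RLmin s i}"
    by (auto simp: is_RLmin_def)
  then show ?thesis
    by (simp add: RLmin_def bars_def)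
qed

text \<open>Position i records the entry s_i (with s_0 = 0) and whether a bar follows it, so that
  isolated entries and non-isolated ascents become properties of consecutive pairs.\<close>

definition bar_marked :: "nat list \<Rightarrow> (nat \<times> bool) list" where
  "bar_marked s = map (\<lambda>i. (ent s i, i \<in> bars s)) [0..<Suc (length s)]"

lemma length_bar_marked [simp]: "length (bar_marked s) = Suc (length s)"
  by (simp add: bar_marked_def)

lemma nth_bar_marked: "i \<le> length s \<Longrightarrow> bar_marked s ! i = (ent s i, i \<in> bars s)"
  by (simp add: bar_marked_def nth_append del: upt_Suc)

lemma bar_marked_Cons: "bar_marked s = (0, True) # tl (bar_marked s)"
proof (cases "bar_marked s")
  case Nil
  then show ?thesis using length_bar_marked[of s] by simp
next
  case (Cons a l)
  then show ?thesis using nth_bar_marked[of 0 s] by (simp add: ent_def bars_def)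
qed

lemma fst_in_set_tl_bar_marked: "b \<in> set (tl (bar_marked s)) \<Longrightarrow> fst b \<in> set s"
  by (auto simp: bar_marked_def upt_conv_Cons ent_def simp del: upt_Suc)

lemma isol_eq_adj_count: "isol s = adj_count (\<lambda>a b. snd a \<and> snd b) (bar_marked s)"
proof -
  let ?I = "{i. Suc i < length (bar_marked s) \<and> snd (bar_marked s ! i) \<and> snd (bar_marked s ! Suc i)}"
  have "{j. isolated s j} = Suc ` ?I"
  proof (intro set_eqI iffI)
    fix j assume "j \<in> {j. isolated s j}"
    then have "j = Suc (j - 1)" "j - 1 \<in> ?I"
      by (auto simp: isolated_def nth_bar_marked)
    then show "j \<in> Suc ` ?I" by blast
  qed (auto simp: isolated_def nth_bar_marked)
  then show ?thesis
    unfolding isol_def adj_count_def by (simp add: card_image)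
qed

lemma iasc_eq_adj_count:
  "iasc s = adj_count (\<lambda>a b. fst a \<le> fst b \<and> \<not> (snd a \<and> snd b)) (bar_marked s)"
  unfolding iasc_def adj_count_def
  by (intro arg_cong[where f = card] Collect_cong)
    (auto simp: nth_bar_marked isolated_def is_ascent_def is_descent_def)

lemma inv_conv_nth: "Defs.inv s = card {(i, j). i < j \<and> j < length s \<and> s ! j < s ! i}"
proof -
  have "{(i, j). 1 \<le> i \<and> i < j \<and> j \<le> length s \<and> ent s j < ent s i} =
        (\<lambda>(i, j). (Suc i, Suc j)) ` {(i, j). i < j \<and> j < length s \<and> s ! j < s ! i}"
  proof (intro set_eqI iffI)
    fix p assume "p \<in> {(i, j). 1 \<le> i \<and> i < j \<and> j \<le> length s \<and> ent s j < ent s i}"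
    then obtain i j where "p = (i, j)" "1 \<le> i" "i < j" "j \<le> length s" "ent s j < ent s i"
      by auto
    then show "p \<in> (\<lambda>(i, j). (Suc i, Suc j)) ` {(i, j). i < j \<and> j < length s \<and> s ! j < s ! i}"
      by (intro image_eqI[where x = "(i - 1, j - 1)"]) (auto simp: ent_def)
  qed (auto simp: ent_def)
  moreover have "inj_on (\<lambda>(i, j). (Suc i, Suc j :: nat)) X" for X
    by (auto simp: inj_on_def)
  ultimately show ?thesis
    unfolding Defs.inv_def by (simp add: card_image)
qed

lemma inv_Nil [simp]: "Defs.inv [] = 0"
  by (simp add: inv_conv_nth)

lemma inv_Cons: "Defs.inv (a # l) = length (filter (\<lambda>b. b < a) l) + Defs.inv l"
proof -
  let ?I = "\<lambda>l. {(i, j). i < j \<and> j < length l \<and> l ! j < l ! i}"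
  have "?I (a # l) = (\<lambda>j. (0, Suc j)) ` {j. j < length l \<and> l ! j < a} \<union> map_prod Suc Suc ` ?I l"
  proof (intro set_eqI iffI)
    fix p assume "p \<in> ?I (a # l)"
    then obtain i j where p: "p = (i, j)" "i < j" "j < length (a # l)" "(a # l) ! j < (a # l) ! i"
      by auto
    show "p \<in> (\<lambda>j. (0, Suc j)) ` {j. j < length l \<and> l ! j < a} \<union> map_prod Suc Suc ` ?I l"
    proof (cases i)
      case 0
      then show ?thesis using p by (intro UnI1 image_eqI[where x = "j - 1"]) auto
    next
      case (Suc i')
      then show ?thesis using p by (intro UnI2 image_eqI[where x = "(i', j - 1)"]) auto
    qed
  qed auto
  moreover have "finite (?I l)"
    by (rule finite_subset[of _ "{..<length l} \<times> {..<length l}"]) auto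
  moreover have "card ((\<lambda>j. (0, Suc j)) ` {j. j < length l \<and> l ! j < a}) = length (filter (\<lambda>b. b < a) l)"
    by (simp add: card_image inj_on_def length_filter_conv_card)
  moreover have "card (map_prod Suc Suc ` ?I l) = card (?I l)"
    by (rule card_image) (simp add: inj_on_def)
  moreover have "(\<lambda>j. (0, Suc j)) ` {j. j < length l \<and> l ! j < a} \<inter> map_prod Suc Suc ` ?I l = {}"
    by auto
  ultimately show ?thesis
    by (simp add: inv_conv_nth card_Un_disjoint)
qed

lemma inv_append:
  "Defs.inv (u @ v) = Defs.inv u + Defs.inv v + (\<Sum>a\<leftarrow>u. length (filter (\<lambda>b. b < a) v))"
  by (induction u) (simp_all add: inv_Cons)

lemma inv_sorted: "sorted l \<Longrightarrow> Defs.inv l = 0"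
  by (induction l) (auto simp: inv_Cons filter_empty_conv)

definition cross_inv :: "nat set \<Rightarrow> nat set \<Rightarrow> nat" where
  "cross_inv S T = (\<Sum>a\<in>S. card {b\<in>T. b < a})"

lemma cross_inv_empty_left [simp]: "cross_inv {} T = 0"
  by (simp add: cross_inv_def)

lemma inv_append_distinct:
  assumes "distinct (u @ v)"
  shows "Defs.inv (u @ v) = Defs.inv u + Defs.inv v + cross_inv (set u) (set v)"
proof -
  have "length (filter (\<lambda>b. b < a) v) = card {b \<in> set v. b < a}" for a
    using assms by (metis distinct_append distinct_card distinct_filter set_filter)
  then have "(\<Sum>a\<leftarrow>u. length (filter (\<lambda>b. b < a) v)) = cross_inv (set u) (set v)"
    using assms by (simp add: sum_list_distinct_conv_sum_set cross_inv_def)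
  then show ?thesis
    by (simp add: inv_append)
qed

lemma cross_inv_insert_left:
  "finite S \<Longrightarrow> M \<notin> S \<Longrightarrow> cross_inv (insert M S) T = card {b\<in>T. b < M} + cross_inv S T"
  unfolding cross_inv_def by simp

lemma cross_inv_insert_right_max:
  "\<forall>a\<in>S. a < M \<Longrightarrow> cross_inv S (insert M T) = cross_inv S T"
  unfolding cross_inv_def by (intro sum.cong) (auto intro!: arg_cong[where f = card])

lemma cross_inv_insert_right_min:
  assumes "finite S" "\<forall>a\<in>S. M < a" "M \<notin> T"
  shows "cross_inv S (insert M T) = card S + cross_inv S T"
proof -
  have "card {b \<in> insert M T. b < a} = 1 + card {b\<in>T. b < a}" if "a \<in> S" for a
  proof -
    have "{b \<in> insert M T. b < a} = insert M {b\<in>T. b < a}"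
      using assms(2) that by auto
    then show ?thesis
      using assms(3) by simp
  qed
  then have "cross_inv S (insert M T) = (\<Sum>a\<in>S. 1 + card {b\<in>T. b < a})"
    unfolding cross_inv_def by (rule sum.cong[OF refl])
  then show ?thesis
    by (simp add: sum_Suc cross_inv_def)
qed

section \<open>Splitting a permutation at its smallest letter\<close>

definition adj_weight :: "'a::comm_semiring_1 \<Rightarrow> 'a \<Rightarrow> nat list \<Rightarrow> 'a" where
  "adj_weight x y w = x ^ adj_count (\<le>) w * y ^ adj_count (>) w"

lemma adj_weight_Nil [simp]: "adj_weight x y [] = 1"
  by (simp add: adj_weight_def)

lemma adj_weight_snoc:
  "u \<noteq> [] \<Longrightarrow> adj_weight x y (u @ [a]) = adj_weight x y u * (if a < last u then y else x)"
  by (simp add: adj_weight_def adj_count_snoc not_less mult_ac)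

lemma ascent_descent_weight:
  assumes "w \<noteq> []" "0 \<notin> set w"
  shows "x ^ (Suc (length w) - des w) * y ^ des w = x * y * adj_weight x y w"
proof -
  obtain a r where w: "w = a # r"
    using assms(1) by (cases w) auto
  then have "adj_count (>) (0 # w) = adj_count (>) w"
    using assms(2) by simp
  then have "des w = Suc (adj_count (>) w)"
    using des_eq_adj_count_Cons_zero[OF assms(2)] assms(1) by simp
  moreover have "adj_count (\<le>) w + adj_count (>) w = length w - 1"
    by (rule adj_count_le_plus_greater)
  ultimately have "Suc (length w) - des w = Suc (adj_count (\<le>) w)" "des w = Suc (adj_count (>) w)"
    using w by auto
  then show ?thesis
    by (simp add: adj_weight_def mult_ac)
qed

definition perm_weight :: "'a::comm_semiring_1 \<Rightarrow> 'a \<Rightarrow> 'a \<Rightarrow> 'a \<Rightarrow> 'a \<Rightarrow> nat list \<Rightarrow> 'a" where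
  "perm_weight q x y z b s = q ^ Defs.inv s * x ^ iasc s * z ^ isol s * y ^ (des s - 1) * b ^ RLmin s"

definition block_weight :: "'a::comm_semiring_1 \<Rightarrow> 'a \<Rightarrow> 'a \<Rightarrow> 'a \<Rightarrow> nat list \<Rightarrow> 'a" where
  "block_weight q x y z w = (if w = [] then z else x * y * q ^ Defs.inv w * adj_weight x y w)"

lemma perm_weight_Nil [simp]: "perm_weight q x y z b [] = 1"
proof -
  have "bar_marked [] = [(0, True)]"
    by (simp add: bar_marked_def ent_def bars_def)
  moreover have "{i. is_RLmin [] i} = {}"
    by (auto simp: is_RLmin_def)
  ultimately show ?thesis
    by (simp add: perm_weight_def iasc_eq_adj_count isol_eq_adj_count des_eq_adj_count RLmin_def)
qed

locale min_split =
  fixes w t :: "nat list" and m :: nat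
  assumes pos: "0 < m" and less_w: "\<forall>a\<in>set w. m < a" and less_t: "\<forall>a\<in>set t. m < a"
begin

lemma is_RLmin_split:
  "is_RLmin (w @ m # t) (Suc k) \<longleftrightarrow> k = length w \<or> (length w < k \<and> is_RLmin t (k - length w))"
proof -
  consider "k < length w" | "k = length w" | j where "k = Suc (length w + j)"
    using less_imp_Suc_add linorder_neqE_nat by blast
  then show ?thesis
  proof cases
    case 1
    then have "m \<in> set (drop (Suc k) (w @ m # t))" "m < (w @ m # t) ! k"
      using less_w by (auto simp: nth_append)
    then show ?thesis
      using 1 by (auto simp: is_RLmin_Suc_iff)
  qed (use less_t in \<open>auto simp: is_RLmin_Suc_iff nth_append\<close>)
qed

lemma bars_split: "bars (w @ m # t) = insert 0 ((+) (Suc (length w)) ` bars t)"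
proof (intro set_eqI)
  fix i
  show "i \<in> bars (w @ m # t) \<longleftrightarrow> i \<in> insert 0 ((+) (Suc (length w)) ` bars t)"
  proof (cases i)
    case (Suc k)
    have "Suc k \<in> (+) (Suc (length w)) ` bars t \<longleftrightarrow>
          k = length w \<or> (length w < k \<and> is_RLmin t (k - length w))"
      by (auto simp: bars_def image_iff is_RLmin_def)
    then show ?thesis
      using Suc by (simp add: bars_def is_RLmin_split)
  qed (simp add: bars_def)
qed

lemma RLmin_split: "RLmin (w @ m # t) = Suc (RLmin t)"
proof -
  have "0 \<notin> (+) (Suc (length w)) ` bars t" "finite (bars t)" "0 \<in> bars t"
    by (auto simp: bars_def is_RLmin_def)
  moreover have "card ((+) (Suc (length w)) ` bars t) = card (bars t)"
    by (rule card_image) simp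
  moreover have "0 < card (bars t)"
    using \<open>finite (bars t)\<close> \<open>0 \<in> bars t\<close> card_gt_0_iff by blast
  ultimately show ?thesis
    by (simp add: RLmin_eq_card_bars bars_split)
qed

lemma zero_notin_w: "0 \<notin> set w" and zero_notin_t: "0 \<notin> set t"
  using pos less_w less_t by auto

lemma bar_marked_split:
  "bar_marked (w @ m # t) = (0, True) # map (\<lambda>v. (v, False)) w @ (m, True) # tl (bar_marked t)"
proof (rule nth_equalityI)
  fix i assume "i < length (bar_marked (w @ m # t))"
  then have i: "i \<le> Suc (length w + length t)"
    by simp
  consider "i = 0" | k where "i = Suc k" "k < length w" | "i = Suc (length w)"
    | j where "i = Suc (Suc (length w + j))" "j < length t"
  proof (cases i)
    case (Suc k)
    moreover have "k < length w \<or> k = length w \<or> (\<exists>j. k = Suc (length w + j))"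
      using less_imp_Suc_add by (metis linorder_neqE_nat)
    ultimately show thesis
      using that i by auto
  qed (use that in blast)
  then show "bar_marked (w @ m # t) ! i =
      ((0, True) # map (\<lambda>v. (v, False)) w @ (m, True) # tl (bar_marked t)) ! i"
  proof cases
    case 1
    then show ?thesis by (simp add: nth_bar_marked ent_def bars_def)
  next
    case 2
    then show ?thesis by (auto simp: nth_bar_marked ent_def bars_split nth_append)
  next
    case 3
    moreover have "Suc (length w) \<in> bars (w @ m # t)"
      by (simp add: bars_def is_RLmin_split)
    ultimately show ?thesis
      by (simp add: nth_bar_marked ent_def nth_append)
  next
    case 4
    then have "Suc (Suc (length w + j)) \<in> bars (w @ m # t) \<longleftrightarrow> Suc j \<in> bars t"
      by (auto simp: bars_split)
    then show ?thesis
      using 4 by (simp add: nth_bar_marked ent_def nth_append nth_tl)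
  qed
qed simp

lemma des_split: "des (w @ m # t) = des w + (if t = [] then 1 else des t)"
proof -
  have "des (w @ m # t) = adj_count (>) ((0 # w) @ m # t @ [0])"
    by (simp add: des_eq_adj_count)
  also have "\<dots> = adj_count (>) ((0 # w) @ [m]) + adj_count (>) (m # t @ [0])"
    by (rule adj_count_append_Cons)
  also have "adj_count (>) ((0 # w) @ [m]) = adj_count (>) (0 # w) + of_bool (m < last (0 # w))"
    by (rule adj_count_snoc) simp
  also have "m < last (0 # w) \<longleftrightarrow> w \<noteq> []"
    using less_w by auto
  also have "adj_count (>) (0 # w) + of_bool (w \<noteq> []) = des w"
    using des_eq_adj_count_Cons_zero[OF zero_notin_w] by simp
  also have "adj_count (>) (m # t @ [0]) = (if t = [] then 1 else des t)"
    using less_t pos by (cases t) (simp_all add: des_eq_adj_count)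
  finally show ?thesis .
qed

lemma adj_count_bar_marked_split:
  "adj_count P (bar_marked (w @ m # t)) =
     adj_count P ((0, True) # map (\<lambda>v. (v, False)) w @ [(m, True)]) +
     adj_count P ((m, True) # tl (bar_marked t))"
  using adj_count_append_Cons[of P "(0, True) # map (\<lambda>v. (v, False)) w" "(m, True)" "tl (bar_marked t)"]
  by (simp add: bar_marked_split)

lemma iasc_split: "iasc (w @ m # t) = (if w = [] then 0 else Suc (length w) - des w) + iasc t"
proof -
  let ?I = "\<lambda>a b :: nat \<times> bool. fst a \<le> fst b \<and> \<not> (snd a \<and> snd b)"
  let ?w = "(0, True) # map (\<lambda>v. (v, False)) w"
  have "adj_count ?I ((m, True) # tl (bar_marked t)) = adj_count ?I ((0, True) # tl (bar_marked t))"
  proof (intro adj_count_Cons_cong)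
    fix c assume "c \<in> set (tl (bar_marked t))"
    then have "m < fst c"
      using less_t fst_in_set_tl_bar_marked by blast
    then show "?I (m, True) c = ?I (0, True) c"
      by simp
  qed
  also have "\<dots> = iasc t"
    unfolding iasc_eq_adj_count by (subst (2) bar_marked_Cons) (rule refl)
  finally have t_part: "adj_count ?I ((m, True) # tl (bar_marked t)) = iasc t" .
  have "\<not> ?I (last ?w) (m, True)"
    using less_w by (cases w rule: rev_cases) auto
  then have "adj_count ?I (?w @ [(m, True)]) = adj_count ?I ?w"
    using adj_count_snoc[of ?w ?I "(m, True)"] by simp
  also have "\<dots> = adj_count ?I (map (\<lambda>v. (v, False)) (0 # w))"
    by (cases w) simp_all
  also have "\<dots> = adj_count (\<le>) (0 # w)"
    unfolding adj_count_map by simp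
  also have "\<dots> = (if w = [] then 0 else Suc (length w) - des w)"
    using adj_count_le_plus_greater[of "0 # w"] des_eq_adj_count_Cons_zero[OF zero_notin_w] by auto
  finally show ?thesis
    using t_part by (simp add: iasc_eq_adj_count adj_count_bar_marked_split)
qed

lemma isol_split: "isol (w @ m # t) = of_bool (w = []) + isol t"
proof -
  let ?I = "\<lambda>a b :: nat \<times> bool. snd a \<and> snd b"
  let ?w = "(0, True) # map (\<lambda>v. (v, False)) w"
  have "adj_count ?I ((m, True) # tl (bar_marked t)) = adj_count ?I ((0, True) # tl (bar_marked t))"
    by (intro adj_count_Cons_cong) simp
  also have "\<dots> = isol t"
    unfolding isol_eq_adj_count by (subst (2) bar_marked_Cons) (rule refl)
  finally have t_part: "adj_count ?I ((m, True) # tl (bar_marked t)) = isol t" .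
  have "adj_count ?I (?w @ [(m, True)]) = adj_count ?I ?w + of_bool (?I (last ?w) (m, True))"
    by (rule adj_count_snoc) simp
  also have "?I (last ?w) (m, True) \<longleftrightarrow> w = []"
    by (cases w rule: rev_cases) auto
  also have "adj_count ?I ?w = adj_count ?I (map (\<lambda>v. (v, False)) (0 # w))"
    by (cases w) simp_all
  also have "\<dots> = 0"
    unfolding adj_count_map by (simp add: adj_count_def)
  finally show ?thesis
    using t_part by (simp add: isol_eq_adj_count adj_count_bar_marked_split)
qed

lemma inv_split:
  assumes "distinct (w @ m # t)"
  shows "Defs.inv (w @ m # t) = Defs.inv w + Defs.inv t + length w + cross_inv (set w) (set t)"
proof -
  have "Defs.inv (w @ m # t) = Defs.inv w + Defs.inv (m # t) + cross_inv (set w) (set (m # t))"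
    using assms by (rule inv_append_distinct)
  moreover have "Defs.inv (m # t) = Defs.inv t"
    using less_t by (auto simp: inv_Cons filter_empty_conv)
  moreover have "cross_inv (set w) (set (m # t)) = length w + cross_inv (set w) (set t)"
    using assms less_w by (simp add: cross_inv_insert_right_min distinct_card)
  ultimately show ?thesis by simp
qed

lemma perm_weight_split:
  assumes "distinct (w @ m # t)"
  shows "perm_weight q x y z b (w @ m # t) =
    q ^ (length w + cross_inv (set w) (set t)) * b * block_weight q x y z w * perm_weight q x y z b t"
proof -
  have "des (w @ m # t) - 1 = des w + (des t - 1)"
    using des_pos[OF zero_notin_t] unfolding des_split by auto
  then have expand: "perm_weight q x y z b (w @ m # t) =
      q ^ (Defs.inv w + Defs.inv t + length w + cross_inv (set w) (set t)) *
      x ^ ((if w = [] then 0 else Suc (length w) - des w) + iasc t) *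
      z ^ (of_bool (w = []) + isol t) * y ^ (des w + (des t - 1)) * b ^ Suc (RLmin t)"
    unfolding perm_weight_def inv_split[OF assms] iasc_split isol_split RLmin_split by simp
  show ?thesis
  proof (cases "w = []")
    case True
    then show ?thesis
      unfolding expand by (simp add: block_weight_def perm_weight_def power_add mult_ac)
  next
    case False
    then have "perm_weight q x y z b (w @ m # t) = q ^ (length w + cross_inv (set w) (set t)) * b *
        (q ^ Defs.inv w * (x ^ (Suc (length w) - des w) * y ^ des w)) * perm_weight q x y z b t"
      unfolding expand by (simp add: perm_weight_def power_add mult_ac)
    also have "x ^ (Suc (length w) - des w) * y ^ des w = x * y * adj_weight x y w"
      using False zero_notin_w by (rule ascent_descent_weight)
    finally show ?thesis
      using False by (simp add: block_weight_def mult_ac)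
  qed
qed

end

section \<open>Gaussian binomial coefficients\<close>

fun qbinom :: "'a::comm_semiring_1 \<Rightarrow> nat \<Rightarrow> nat \<Rightarrow> 'a" where
  "qbinom q n 0 = 1"
| "qbinom q 0 (Suc k) = 0"
| "qbinom q (Suc n) (Suc k) = qbinom q n (Suc k) + q ^ (n - k) * qbinom q n k"

lemma qbinom_eq_0: "n < k \<Longrightarrow> qbinom q n k = 0"
proof (induction n arbitrary: k)
  case 0
  then show ?case by (cases k) auto
next
  case (Suc n)
  then show ?case by (cases k) auto
qed

lemma qbinom_self [simp]: "qbinom q n n = 1"
  by (induction n) (auto simp: qbinom_eq_0)

lemma qpoch_0 [simp]: "qpoch q 0 = 1"
  by (simp add: qpoch_def)

lemma qpoch_Suc: "qpoch q (Suc n) = qpoch q n * (1 - q ^ Suc n)"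
  by (simp add: qpoch_def)

lemma qbinom_mult_qpoch:
  "k \<le> n \<Longrightarrow> qbinom q n k * qpoch q k * qpoch q (n - k) = qpoch q n"
proof (induction n arbitrary: k)
  case 0
  then show ?case by simp
next
  case (Suc n)
  show ?case
  proof (cases k)
    case 0
    then show ?thesis by simp
  next
    case (Suc j)
    show ?thesis
    proof (cases "j = n")
      case False
      then have "j < n"
        using Suc \<open>k \<le> Suc n\<close> by simp
      then have qpoch_diff: "qpoch q (n - j) = qpoch q (n - Suc j) * (1 - q ^ (n - j))"
        by (metis Suc_diff_Suc qpoch_Suc)
      have powers: "q ^ (n - j) * q ^ Suc j = q ^ Suc n"
        using \<open>j < n\<close> by (simp flip: power_add)
      have "qbinom q (Suc n) k * qpoch q k * qpoch q (Suc n - k) =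
          (qbinom q n (Suc j) * qpoch q (Suc j) * qpoch q (n - Suc j)) * (1 - q ^ (n - j)) +
          q ^ (n - j) * (qbinom q n j * qpoch q j * qpoch q (n - j)) * (1 - q ^ Suc j)"
        using Suc by (simp add: qpoch_Suc qpoch_diff algebra_simps)
      also have "\<dots> = qpoch q n * (1 - q ^ (n - j) * q ^ Suc j)"
        using Suc.IH[of "Suc j"] Suc.IH[of j] \<open>j < n\<close> by (simp add: algebra_simps)
      also have "\<dots> = qpoch q (Suc n)"
        by (simp only: powers qpoch_Suc)
      finally show ?thesis .
    qed (simp add: Suc qbinom_eq_0 qpoch_Suc)
  qed
qed

lemma subsets_card_Suc_insert:
  assumes "finite B" "M \<notin> B"
  shows "{S. S \<subseteq> insert M B \<and> card S = Suc j} =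
    {S. S \<subseteq> B \<and> card S = Suc j} \<union> insert M ` {S. S \<subseteq> B \<and> card S = j}"
proof (intro set_eqI iffI)
  fix S assume S: "S \<in> {S. S \<subseteq> insert M B \<and> card S = Suc j}"
  then have "finite S"
    using assms(1) finite_subset by auto
  show "S \<in> {S. S \<subseteq> B \<and> card S = Suc j} \<union> insert M ` {S. S \<subseteq> B \<and> card S = j}"
  proof (cases "M \<in> S")
    case True
    then have "S - {M} \<in> {S. S \<subseteq> B \<and> card S = j}"
      using S \<open>finite S\<close> by auto
    moreover have "S = insert M (S - {M})"
      using True by blast
    ultimately show ?thesis
      by blast
  qed (use S in auto)
next
  fix S assume "S \<in> {S. S \<subseteq> B \<and> card S = Suc j} \<union> insert M ` {S. S \<subseteq> B \<and> card S = j}"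
  then show "S \<in> {S. S \<subseteq> insert M B \<and> card S = Suc j}"
  proof
    assume "S \<in> insert M ` {S. S \<subseteq> B \<and> card S = j}"
    then obtain T where T: "S = insert M T" "T \<subseteq> B" "card T = j"
      by auto
    then have "finite T" "M \<notin> T"
      using assms finite_subset by auto
    then show ?thesis
      using T by auto
  qed auto
qed

lemma cross_inv_insert_max:
  assumes "finite B" "\<forall>a\<in>B. a < M" "S \<subseteq> B"
  shows "cross_inv S (insert M B - S) = cross_inv S (B - S)"
    and "cross_inv (insert M S) (insert M B - insert M S) = card B - card S + cross_inv S (B - S)"
proof -
  have "M \<notin> B" "finite S" "M \<notin> S"
    using assms finite_subset by auto
  moreover have "insert M B - S = insert M (B - S)" "insert M B - insert M S = B - S"
    using \<open>M \<notin> B\<close> assms(3) by auto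
  moreover have "{b \<in> B - S. b < M} = B - S"
    using assms(2) by auto
  ultimately show "cross_inv S (insert M B - S) = cross_inv S (B - S)"
    and "cross_inv (insert M S) (insert M B - insert M S) = card B - card S + cross_inv S (B - S)"
    using assms by (auto simp: cross_inv_insert_right_max cross_inv_insert_left card_Diff_subset subset_iff)
qed

lemma sum_subsets_cross_inv:
  fixes q :: "'a::comm_semiring_1"
  assumes "finite B"
  shows "(\<Sum>S | S \<subseteq> B \<and> card S = k. q ^ cross_inv S (B - S)) = qbinom q (card B) k"
  using assms
proof (induction B arbitrary: k rule: finite_linorder_max_induct)
  case empty
  have "{S :: nat set. S = {} \<and> card S = k} = (if k = 0 then {{}} else {})"
    by auto
  then show ?case
    by (simp add: qbinom_eq_0)
next
  case (insert M B)
  have M: "M \<notin> B" "\<forall>a\<in>B. a < M"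
    using insert by auto
  let ?C = "\<lambda>k. {S. S \<subseteq> B \<and> card S = k}"
  let ?f = "\<lambda>S. q ^ cross_inv S (insert M B - S)"
  show ?case
  proof (cases k)
    case 0
    have "finite S" if "S \<subseteq> insert M B" for S
      using that insert.hyps(1) finite_subset by blast
    then have "{S. S \<subseteq> insert M B \<and> card S = k} = {{}}"
      using 0 by auto
    then show ?thesis
      using 0 by simp
  next
    case (Suc j)
    have without_M: "sum ?f (?C k) = qbinom q (card B) k"
      using insert.IH cross_inv_insert_max(1)[OF insert.hyps(1) M(2)] by simp
    have "?f (insert M S) = q ^ (card B - j) * q ^ cross_inv S (B - S)" if "S \<in> ?C j" for S
      using that cross_inv_insert_max(2)[OF insert.hyps(1) M(2), of S] by (simp add: power_add)
    moreover have "inj_on (insert M) (?C j)"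
      using M(1) by (intro inj_onI) (auto simp: insert_ident subset_iff)
    ultimately have with_M: "sum ?f (insert M ` ?C j) = q ^ (card B - j) * qbinom q (card B) j"
      using insert.IH by (simp add: sum.reindex flip: sum_distrib_left)
    have "sum ?f (?C k \<union> insert M ` ?C j) = sum ?f (?C k) + sum ?f (insert M ` ?C j)"
      using M(1) insert.hyps(1) by (intro sum.union_disjoint) auto
    then show ?thesis
      using M(1) insert.hyps(1)
      by (simp add: Suc subsets_card_Suc_insert without_M[unfolded Suc] with_M)
  qed
qed

section \<open>The recurrence for the polynomials\<close>

lemma bij_betw_permutations_of_set_split:
  assumes "m \<in> A"
  shows "bij_betw (\<lambda>(S, w, t). w @ m # t)
    (SIGMA S:Pow (A - {m}). permutations_of_set S \<times> permutations_of_set (A - {m} - S))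
    (permutations_of_set A)"
proof (rule bij_betw_imageI)
  let ?B = "A - {m}"
  let ?Sig = "SIGMA S:Pow ?B. permutations_of_set S \<times> permutations_of_set (?B - S)"
  let ?join = "\<lambda>(S, w, t). w @ m # t"
  show "inj_on ?join ?Sig"
  proof (rule inj_onI)
    fix p p' assume p: "p \<in> ?Sig" "p' \<in> ?Sig" "?join p = ?join p'"
    obtain S w t S' w' t' where [simp]: "p = (S, w, t)" "p' = (S', w', t')"
      by (cases p, cases p') auto
    have "set w = S" "set w' = S'" "m \<notin> set w" "m \<notin> set w'" "m \<notin> set t"
      using p by (auto dest: permutations_of_setD)
    then show "p = p'"
      using p(3) append_Cons_eq_iff[of m w t w' t'] by auto
  qed
  show "?join ` ?Sig = permutations_of_set A"
  proof (intro set_eqI iffI)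
    fix \<sigma> assume "\<sigma> \<in> ?join ` ?Sig"
    then obtain S w t where "S \<subseteq> ?B" "w \<in> permutations_of_set S" "t \<in> permutations_of_set (?B - S)"
      and "\<sigma> = w @ m # t"
      by auto
    then show "\<sigma> \<in> permutations_of_set A"
      using assms by (auto simp: permutations_of_set_def)
  next
    fix \<sigma> assume "\<sigma> \<in> permutations_of_set A"
    then have \<sigma>: "set \<sigma> = A" "distinct \<sigma>"
      by (auto dest: permutations_of_setD)
    then obtain w t where wt: "\<sigma> = w @ m # t"
      using assms by (metis split_list)
    then have "set w \<subseteq> ?B" "set t = ?B - set w" "distinct w" "distinct t"
      using \<sigma> by auto
    then show "\<sigma> \<in> ?join ` ?Sig"
      using wt by (intro image_eqI[where x = "(set w, w, t)"]) (auto simp: permutations_of_set_def)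
  qed
qed

lemma sum_permutations_of_set_split:
  assumes "finite A" "m \<in> A"
  shows "(\<Sum>\<sigma>\<in>permutations_of_set A. h \<sigma>) =
    (\<Sum>S\<in>Pow (A - {m}). \<Sum>w\<in>permutations_of_set S. \<Sum>t\<in>permutations_of_set (A - {m} - S). h (w @ m # t))"
proof -
  let ?B = "A - {m}"
  have "(\<Sum>\<sigma>\<in>permutations_of_set A. h \<sigma>) =
      (\<Sum>p\<in>(SIGMA S:Pow ?B. permutations_of_set S \<times> permutations_of_set (?B - S)). h (case p of (S, w, t) \<Rightarrow> w @ m # t))"
    using bij_betw_permutations_of_set_split[OF assms(2)] by (simp add: sum.reindex_bij_betw)
  also have "\<dots> = (\<Sum>S\<in>Pow ?B. \<Sum>p\<in>permutations_of_set S \<times> permutations_of_set (?B - S). h (fst p @ m # snd p))"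
    using assms(1) by (subst sum.Sigma) (auto simp: case_prod_beta)
  finally show ?thesis
    by (simp add: sum.cartesian_product case_prod_beta)
qed

fun F_rec :: "(nat \<Rightarrow> 'a::comm_semiring_1) \<Rightarrow> 'a \<Rightarrow> 'a \<Rightarrow> nat \<Rightarrow> 'a" where
  "F_rec W q b 0 = 1"
| "F_rec W q b (Suc n) = b * (\<Sum>k\<le>n. qbinom q n k * q ^ k * W k * F_rec W q b (n - k))"

lemma perm_weight_split_permutations:
  assumes "0 < m" "\<forall>a\<in>B. m < a" "S \<subseteq> B"
    and "w \<in> permutations_of_set S" "t \<in> permutations_of_set (B - S)"
  shows "perm_weight q x y z b (w @ m # t) =
    q ^ (card S + cross_inv S (B - S)) * b * block_weight q x y z w * perm_weight q x y z b t"
proof -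
  have w: "set w = S" "distinct w" "length w = card S" and t: "set t = B - S" "distinct t"
    using assms(4,5) by (auto dest: permutations_of_setD length_finite_permutations_of_set)
  then interpret min_split w t m
    using assms(1-3) by unfold_locales auto
  have "distinct (w @ m # t)"
    using w t assms(2,3) by auto
  then have "perm_weight q x y z b (w @ m # t) = q ^ (length w + cross_inv (set w) (set t)) * b *
      block_weight q x y z w * perm_weight q x y z b t"
    by (rule perm_weight_split)
  then show ?thesis
    using w t by simp
qed

lemma sum_perm_weight_split_min:
  assumes "finite A" "0 \<notin> A" "A \<noteq> {}"
  defines "B \<equiv> A - {Min A}"
  shows "(\<Sum>\<sigma>\<in>permutations_of_set A. perm_weight q x y z b \<sigma>) =
    b * (\<Sum>S\<in>Pow B. q ^ (card S + cross_inv S (B - S)) *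
      (\<Sum>w\<in>permutations_of_set S. block_weight q x y z w) *
      (\<Sum>t\<in>permutations_of_set (B - S). perm_weight q x y z b t))"
proof -
  let ?m = "Min A"
  have "?m \<in> A"
    using assms(1,3) by simp
  have "?m < a" if "a \<in> B" for a
  proof -
    have "a \<in> A" "a \<noteq> ?m"
      using that by (auto simp: B_def)
    then show ?thesis
      using Min_le[OF assms(1) \<open>a \<in> A\<close>] by linarith
  qed
  then have m: "0 < ?m" "\<forall>a\<in>B. ?m < a"
    using \<open>?m \<in> A\<close> assms(2) by (auto intro: gr0I)
  have "(\<Sum>w\<in>permutations_of_set S. \<Sum>t\<in>permutations_of_set (B - S). perm_weight q x y z b (w @ ?m # t)) =
      b * (q ^ (card S + cross_inv S (B - S)) *
      (\<Sum>w\<in>permutations_of_set S. block_weight q x y z w) *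
      (\<Sum>t\<in>permutations_of_set (B - S). perm_weight q x y z b t))" if "S \<subseteq> B" for S
  proof -
    have "(\<Sum>w\<in>permutations_of_set S. \<Sum>t\<in>permutations_of_set (B - S). perm_weight q x y z b (w @ ?m # t)) =
        (\<Sum>w\<in>permutations_of_set S. \<Sum>t\<in>permutations_of_set (B - S).
          (q ^ (card S + cross_inv S (B - S)) * b) * (block_weight q x y z w * perm_weight q x y z b t))"
      using perm_weight_split_permutations[OF m that] by (intro sum.cong refl) (simp add: mult_ac)
    also have "\<dots> = (q ^ (card S + cross_inv S (B - S)) * b) *
        ((\<Sum>w\<in>permutations_of_set S. block_weight q x y z w) *
         (\<Sum>t\<in>permutations_of_set (B - S). perm_weight q x y z b t))"
      unfolding sum_product by (simp only: sum_distrib_left)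
    finally show ?thesis
      by (simp add: mult_ac)
  qed
  moreover have "(\<Sum>\<sigma>\<in>permutations_of_set A. perm_weight q x y z b \<sigma>) =
      (\<Sum>S\<in>Pow B. \<Sum>w\<in>permutations_of_set S. \<Sum>t\<in>permutations_of_set (B - S). perm_weight q x y z b (w @ ?m # t))"
    unfolding B_def by (rule sum_permutations_of_set_split[OF assms(1) \<open>?m \<in> A\<close>])
  ultimately show ?thesis
    by (simp add: sum_distrib_left)
qed

lemma sum_perm_weight_eq_F_rec:
  assumes W: "\<And>S. finite S \<Longrightarrow> 0 \<notin> S \<Longrightarrow> (\<Sum>w\<in>permutations_of_set S. block_weight q x y z w) = W (card S)"
  shows "finite A \<Longrightarrow> 0 \<notin> A \<Longrightarrow> (\<Sum>\<sigma>\<in>permutations_of_set A. perm_weight q x y z b \<sigma>) = F_rec W q b (card A)"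
proof (induction "card A" arbitrary: A rule: less_induct)
  case less
  show ?case
  proof (cases "A = {}")
    case False
    define B where "B = A - {Min A}"
    have "Min A \<in> A"
      using less.prems(1) False by simp
    then have B: "finite B" "0 \<notin> B" "card A = Suc (card B)"
      using less.prems card_Suc_Diff1[OF less.prems(1)] by (auto simp: B_def)
    have "(\<Sum>\<sigma>\<in>permutations_of_set A. perm_weight q x y z b \<sigma>) =
        b * (\<Sum>S\<in>Pow B. q ^ cross_inv S (B - S) * (q ^ card S * W (card S) * F_rec W q b (card B - card S)))"
    proof -
      have "(\<Sum>t\<in>permutations_of_set (B - S). perm_weight q x y z b t) = F_rec W q b (card B - card S)"
        if "S \<subseteq> B" for S
        using less.hyps[of "B - S"] that B by (simp add: card_Diff_subset finite_subset)
      moreover have "(\<Sum>w\<in>permutations_of_set S. block_weight q x y z w) = W (card S)" if "S \<subseteq> B" for S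
        using W that B by (meson finite_subset subsetD)
      ultimately show ?thesis
        unfolding sum_perm_weight_split_min[OF less.prems False, folded B_def]
        by (intro arg_cong[where f = "(*) b"] sum.cong) (simp_all add: power_add mult_ac)
    qed
    also have "\<dots> = b * (\<Sum>k\<le>card B. \<Sum>S | S \<subseteq> B \<and> card S = k.
        q ^ cross_inv S (B - S) * (q ^ k * W k * F_rec W q b (card B - k)))"
      using B(1) by (subst sum.group[symmetric, where g = card]) (auto simp: card_mono Pow_def)
    also have "\<dots> = F_rec W q b (card A)"
      using B by (simp add: sum_subsets_cross_inv flip: sum_distrib_right) (simp add: mult_ac)
    finally show ?thesis .
  qed simp
qed

section \<open>The blocks in front of the smallest letter\<close>

lemma sorted_snoc_iff: "xs \<noteq> [] \<Longrightarrow> sorted (xs @ [a]) \<longleftrightarrow> sorted xs \<and> last xs \<le> a"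
  for xs :: "'a::linorder list"
  by (induction xs rule: induct_list012) auto

lemma adj_weight_expansion:
  fixes x y :: "'a::comm_ring_1"
  assumes "w \<noteq> []"
  shows "(x - y) * adj_weight x y w = of_bool (sorted w) * (x - y) ^ length w +
    y * (\<Sum>i\<in>{1..<length w}. of_bool (sorted (drop i w)) * (x - y) ^ (length w - i) *
      adj_weight x y (take i w))"
  using assms
proof (induction w rule: rev_induct)
  case (snoc a u)
  show ?case
  proof (cases "u = []")
    case False
    let ?n = "length u" and ?c = "x - y"
    let ?f = "\<lambda>i. of_bool (sorted (drop i (u @ [a]))) * ?c ^ (Suc ?n - i) * adj_weight x y (take i (u @ [a]))"
    let ?g = "\<lambda>i. of_bool (sorted (drop i u)) * ?c ^ (?n - i) * adj_weight x y (take i u)"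
    have "?f i = of_bool (last u \<le> a) * ?c * ?g i" if "i \<in> {1..<?n}" for i
    proof -
      have "drop i u \<noteq> []" "last (drop i u) = last u" "Suc ?n - i = Suc (?n - i)"
        using that by (auto intro: last_drop)
      then show ?thesis
        using that by (simp add: sorted_snoc_iff)
    qed
    then have "(\<Sum>i\<in>{1..<Suc ?n}. ?f i) = ?c * adj_weight x y u + of_bool (last u \<le> a) * ?c * (\<Sum>i\<in>{1..<?n}. ?g i)"
      using False by (simp add: sum_distrib_left)
    moreover have "?c * adj_weight x y u = of_bool (sorted u) * ?c ^ ?n + y * (\<Sum>i\<in>{1..<?n}. ?g i)"
      using snoc.IH[OF False] .
    ultimately show ?thesis
      using False by (cases "last u \<le> a") (simp_all add: adj_weight_snoc sorted_snoc_iff algebra_simps)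
  qed (simp add: adj_weight_def)
qed simp

lemma bij_betw_permutations_sorted_suffix:
  assumes "finite S" "k \<le> card S"
  shows "bij_betw (\<lambda>(S', \<alpha>). \<alpha> @ sorted_list_of_set (S - S'))
    (SIGMA S':{S'. S' \<subseteq> S \<and> card S' = k}. permutations_of_set S')
    {w \<in> permutations_of_set S. sorted (drop k w)}"
proof (rule bij_betw_imageI)
  let ?Sig = "SIGMA S':{S'. S' \<subseteq> S \<and> card S' = k}. permutations_of_set S'"
  let ?join = "\<lambda>(S', \<alpha>). \<alpha> @ sorted_list_of_set (S - S')"
  show "inj_on ?join ?Sig"
  proof (rule inj_onI)
    fix p p' assume p: "p \<in> ?Sig" "p' \<in> ?Sig" "?join p = ?join p'"
    obtain S1 \<alpha> S1' \<alpha>' where [simp]: "p = (S1, \<alpha>)" "p' = (S1', \<alpha>')"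
      by (cases p, cases p') auto
    have "set \<alpha> = S1" "set \<alpha>' = S1'" "length \<alpha> = k" "length \<alpha>' = k"
      using p(1,2) by (auto dest: permutations_of_setD length_finite_permutations_of_set)
    then show "p = p'"
      using p(3) by auto
  qed
  show "?join ` ?Sig = {w \<in> permutations_of_set S. sorted (drop k w)}"
  proof (intro set_eqI iffI)
    fix w assume "w \<in> ?join ` ?Sig"
    then obtain S' \<alpha> where S': "S' \<subseteq> S" "card S' = k" "\<alpha> \<in> permutations_of_set S'"
      and w: "w = \<alpha> @ sorted_list_of_set (S - S')"
      by auto
    then have "set \<alpha> = S'" "distinct \<alpha>" "length \<alpha> = k"
      by (auto dest: permutations_of_setD length_finite_permutations_of_set)
    then show "w \<in> {w \<in> permutations_of_set S. sorted (drop k w)}"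
      using S'(1) assms(1) w by (auto simp: permutations_of_set_def)
  next
    fix w assume "w \<in> {w \<in> permutations_of_set S. sorted (drop k w)}"
    then have w: "set w = S" "distinct w" "sorted (drop k w)"
      by (auto dest: permutations_of_setD)
    let ?\<alpha> = "take k w"
    have "length ?\<alpha> = k"
      using w assms(2) by (simp add: distinct_card[symmetric])
    moreover have "set w = set ?\<alpha> \<union> set (drop k w)"
      by (metis append_take_drop_id set_append)
    then have "set ?\<alpha> \<subseteq> S" "set (drop k w) = S - set ?\<alpha>"
      using w(1) set_take_disj_set_drop_if_distinct[OF w(2), of k k] by auto
    moreover have "drop k w = sorted_list_of_set (S - set ?\<alpha>)"
      using w \<open>set (drop k w) = S - set ?\<alpha>\<close> assms(1) by (intro sorted_distinct_set_unique) auto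
    moreover have "w = ?\<alpha> @ drop k w"
      by simp
    ultimately show "w \<in> ?join ` ?Sig"
      using w(2) by (intro image_eqI[where x = "(set ?\<alpha>, ?\<alpha>)"])
        (auto simp: permutations_of_set_def distinct_card simp del: append_take_drop_id)
  qed
qed

lemma sum_permutations_sorted_suffix:
  fixes h :: "nat list \<Rightarrow> 'a::comm_semiring_1"
  assumes "finite S" "k \<le> card S"
  shows "(\<Sum>w\<in>permutations_of_set S. of_bool (sorted (drop k w)) * h w) =
    (\<Sum>S' | S' \<subseteq> S \<and> card S' = k. \<Sum>\<alpha>\<in>permutations_of_set S'. h (\<alpha> @ sorted_list_of_set (S - S')))"
proof -
  have "(\<Sum>w\<in>permutations_of_set S. of_bool (sorted (drop k w)) * h w) =
      (\<Sum>w\<in>{w \<in> permutations_of_set S. sorted (drop k w)}. h w)"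
    by (simp add: Int_def)
  also have "\<dots> = (\<Sum>p\<in>(SIGMA S':{S'. S' \<subseteq> S \<and> card S' = k}. permutations_of_set S').
      h (case p of (S', \<alpha>) \<Rightarrow> \<alpha> @ sorted_list_of_set (S - S')))"
    using bij_betw_permutations_sorted_suffix[OF assms] by (simp add: sum.reindex_bij_betw)
  finally show ?thesis
    using assms(1) by (simp add: sum.Sigma case_prod_beta)
qed

lemma sum_inv_adj_weight_sorted_suffix:
  fixes q x y :: "'a::comm_semiring_1"
  assumes "finite S" "k \<le> card S"
    and V: "\<And>S'. S' \<subseteq> S \<Longrightarrow> card S' = k \<Longrightarrow> (\<Sum>w\<in>permutations_of_set S'. q ^ Defs.inv w * adj_weight x y w) = V"
  shows "(\<Sum>w\<in>permutations_of_set S. of_bool (sorted (drop k w)) * (q ^ Defs.inv w * adj_weight x y (take k w))) =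
    qbinom q (card S) k * V"
proof -
  have "(\<Sum>\<alpha>\<in>permutations_of_set S'. q ^ Defs.inv (\<alpha> @ sorted_list_of_set (S - S')) *
        adj_weight x y (take k (\<alpha> @ sorted_list_of_set (S - S')))) = q ^ cross_inv S' (S - S') * V"
    if "S' \<subseteq> S" "card S' = k" for S'
  proof -
    have "q ^ Defs.inv (\<alpha> @ sorted_list_of_set (S - S')) * adj_weight x y (take k (\<alpha> @ sorted_list_of_set (S - S'))) =
        q ^ cross_inv S' (S - S') * (q ^ Defs.inv \<alpha> * adj_weight x y \<alpha>)"
      if "\<alpha> \<in> permutations_of_set S'" for \<alpha>
    proof -
      have "set \<alpha> = S'" "distinct \<alpha>" "length \<alpha> = k"
        using that \<open>card S' = k\<close> by (auto dest: permutations_of_setD length_finite_permutations_of_set)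
      then show ?thesis
        using assms(1) by (simp add: inv_append_distinct inv_sorted power_add mult_ac)
    qed
    then have "(\<Sum>\<alpha>\<in>permutations_of_set S'. q ^ Defs.inv (\<alpha> @ sorted_list_of_set (S - S')) *
        adj_weight x y (take k (\<alpha> @ sorted_list_of_set (S - S')))) =
        (\<Sum>\<alpha>\<in>permutations_of_set S'. q ^ cross_inv S' (S - S') * (q ^ Defs.inv \<alpha> * adj_weight x y \<alpha>))"
      by (rule sum.cong[OF refl])
    also have "\<dots> = q ^ cross_inv S' (S - S') * V"
      using V[OF that] by (simp flip: sum_distrib_left)
    finally show ?thesis .
  qed
  then show ?thesis
    using sum_subsets_cross_inv[OF assms(1), of q k]
    by (simp add: sum_permutations_sorted_suffix[OF assms(1,2)] flip: sum_distrib_right)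
qed

lemma inv_adj_weight_expansion:
  fixes q x y :: "'a::comm_ring_1"
  assumes "w \<noteq> []"
  shows "(x - y) * (q ^ Defs.inv w * adj_weight x y w) =
    (x - y) ^ length w * (of_bool (sorted w) * q ^ Defs.inv w) +
    y * (\<Sum>i\<in>{1..<length w}. (x - y) ^ (length w - i) *
      (of_bool (sorted (drop i w)) * (q ^ Defs.inv w * adj_weight x y (take i w))))"
proof -
  have "(x - y) * (q ^ Defs.inv w * adj_weight x y w) = q ^ Defs.inv w * ((x - y) * adj_weight x y w)"
    by (rule mult.left_commute)
  then show ?thesis
    unfolding adj_weight_expansion[OF assms]
    by (simp add: sum_distrib_left algebra_simps del: sum_of_bool_mult_eq)
qed

fun A_rec :: "'a::field \<Rightarrow> 'a \<Rightarrow> 'a \<Rightarrow> nat \<Rightarrow> 'a" where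
  "A_rec q x y 0 = 0"
| "A_rec q x y (Suc n) = ((x - y) ^ Suc n +
    y * (\<Sum>i\<in>{1..<Suc n}. qbinom q (Suc n) i * (x - y) ^ (Suc n - i) * A_rec q x y i)) / (x - y)"

lemma sum_inv_adj_weight_eq_A_rec:
  fixes q x y :: "'a::field"
  assumes "x \<noteq> y"
  shows "finite S \<Longrightarrow> S \<noteq> {} \<Longrightarrow>
    (\<Sum>w\<in>permutations_of_set S. q ^ Defs.inv w * adj_weight x y w) = A_rec q x y (card S)"
proof (induction "card S" arbitrary: S rule: less_induct)
  case less
  let ?n = "card S" and ?c = "x - y" and ?P = "permutations_of_set S"
  let ?F = "\<lambda>i w. of_bool (sorted (drop i w)) * (q ^ Defs.inv w * adj_weight x y (take i w))"
  obtain n where n: "?n = Suc n"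
    using less.prems by (metis card_gt_0_iff gr0_conv_Suc)
  have "?c * (q ^ Defs.inv w * adj_weight x y w) =
      ?c ^ ?n * ?F 0 w + y * (\<Sum>i\<in>{1..<?n}. ?c ^ (?n - i) * ?F i w)" if "w \<in> ?P" for w
  proof -
    have "length w = ?n" "w \<noteq> []"
      using that less.prems(2) by (auto dest: length_finite_permutations_of_set permutations_of_setD)
    then show ?thesis
      using inv_adj_weight_expansion[of w x y q] by simp
  qed
  then have "?c * (\<Sum>w\<in>?P. q ^ Defs.inv w * adj_weight x y w) =
      (\<Sum>w\<in>?P. ?c ^ ?n * ?F 0 w + y * (\<Sum>i\<in>{1..<?n}. ?c ^ (?n - i) * ?F i w))"
    unfolding sum_distrib_left[of ?c] by (rule sum.cong[OF refl])
  also have "\<dots> = ?c ^ ?n * (\<Sum>w\<in>?P. ?F 0 w) + y * (\<Sum>i\<in>{1..<?n}. ?c ^ (?n - i) * (\<Sum>w\<in>?P. ?F i w))"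
    by (simp only: sum.distrib sum_distrib_left sum.swap[of _ ?P])
  also have "(\<Sum>w\<in>?P. ?F 0 w) = qbinom q ?n 0 * 1"
  proof (rule sum_inv_adj_weight_sorted_suffix[OF less.prems(1)])
    fix S' assume "S' \<subseteq> S" "card S' = 0"
    moreover have "finite S'"
      using \<open>S' \<subseteq> S\<close> less.prems(1) finite_subset by blast
    ultimately show "(\<Sum>w\<in>permutations_of_set S'. q ^ Defs.inv w * adj_weight x y w) = 1"
      by simp
  qed simp
  also have "(\<Sum>i\<in>{1..<?n}. ?c ^ (?n - i) * (\<Sum>w\<in>?P. ?F i w)) =
      (\<Sum>i\<in>{1..<?n}. qbinom q ?n i * ?c ^ (?n - i) * A_rec q x y i)"
  proof (intro sum.cong refl)
    fix i assume i: "i \<in> {1..<?n}"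
    have "(\<Sum>w\<in>?P. ?F i w) = qbinom q ?n i * A_rec q x y i"
    proof (rule sum_inv_adj_weight_sorted_suffix[OF less.prems(1)])
      fix S' assume S': "S' \<subseteq> S" "card S' = i"
      then have "finite S'" "S' \<noteq> {}" "card S' < ?n"
        using i less.prems(1) finite_subset by auto
      then show "(\<Sum>w\<in>permutations_of_set S'. q ^ Defs.inv w * adj_weight x y w) = A_rec q x y i"
        using less.hyps[of S'] S'(2) by simp
    qed (use i in simp)
    then show "?c ^ (?n - i) * (\<Sum>w\<in>?P. ?F i w) = qbinom q ?n i * ?c ^ (?n - i) * A_rec q x y i"
      by (simp add: mult_ac)
  qed
  finally show ?case
    using assms by (simp add: n field_simps)
qed

definition block_sum :: "'a::field \<Rightarrow> 'a \<Rightarrow> 'a \<Rightarrow> 'a \<Rightarrow> nat \<Rightarrow> 'a" where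
  "block_sum q x y z k = (if k = 0 then z else x * y * A_rec q x y k)"

lemma sum_block_weight:
  assumes "x \<noteq> y" "finite S"
  shows "(\<Sum>w\<in>permutations_of_set S. block_weight q x y z w) = block_sum q x y z (card S)"
proof (cases "S = {}")
  case False
  have "(\<Sum>w\<in>permutations_of_set S. block_weight q x y z w) =
      x * y * (\<Sum>w\<in>permutations_of_set S. q ^ Defs.inv w * adj_weight x y w)"
    unfolding sum_distrib_left
  proof (rule sum.cong[OF refl])
    fix w assume "w \<in> permutations_of_set S"
    then have "w \<noteq> []"
      using False by (auto dest: permutations_of_setD)
    then show "block_weight q x y z w = x * y * (q ^ Defs.inv w * adj_weight x y w)"
      by (simp add: block_weight_def mult.assoc)
  qed
  then show ?thesis
    using sum_inv_adj_weight_eq_A_rec[OF assms False] False assms(2) by (simp add: block_sum_def)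
qed (simp add: block_weight_def block_sum_def)

lemma Finv_eq_F_rec:
  assumes "x \<noteq> y"
  shows "Finv q x y z b n = F_rec (block_sum q x y z) q b n"
proof (cases "n = 0")
  case False
  then have "Finv q x y z b n = (\<Sum>s\<in>permutations_of_set {1..n}. perm_weight q x y z b s)"
    by (simp add: Finv_def perm_weight_def)
  also have "\<dots> = F_rec (block_sum q x y z) q b n"
    using sum_perm_weight_eq_F_rec[of q x y z "block_sum q x y z" "{1..n}" b] sum_block_weight[OF assms]
    by simp
  finally show ?thesis .
qed (simp add: Finv_def)

section \<open>Generating functions and the infinite product\<close>

lemma qpoch_nonzero: "norm q < 1 \<Longrightarrow> qpoch q n \<noteq> 0"
proof -
  assume q: "norm q < 1"
  have "q ^ i \<noteq> 1" if "1 \<le> i" for i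
  proof -
    have "norm (q ^ i) < 1"
      using q that by (simp add: norm_power power_less_one_iff)
    then show ?thesis
      by auto
  qed
  then show ?thesis
    by (auto simp: qpoch_def)
qed

lemma qbinom_conv_qpoch:
  "norm q < 1 \<Longrightarrow> k \<le> n \<Longrightarrow> qbinom q n k = qpoch q n / (qpoch q k * qpoch q (n - k))"
  using qbinom_mult_qpoch[of k n q] qpoch_nonzero[of q] by (simp add: field_simps)

definition q_egf :: "complex \<Rightarrow> (nat \<Rightarrow> complex) \<Rightarrow> complex fps" where
  "q_egf q a = Abs_fps (\<lambda>n. a n / qpoch q n)"

lemma q_egf_nth [simp]: "fps_nth (q_egf q a) n = a n / qpoch q n"
  by (simp add: q_egf_def)

lemma q_egf_mult:
  assumes "norm q < 1"
  shows "q_egf q a * q_egf q c = q_egf q (\<lambda>n. \<Sum>k\<le>n. qbinom q n k * a k * c (n - k))"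
proof (rule fps_ext)
  fix n
  have "a k / qpoch q k * (c (n - k) / qpoch q (n - k)) = qbinom q n k * a k * c (n - k) / qpoch q n"
    if "k \<le> n" for k
    using that assms qpoch_nonzero[OF assms] by (simp add: qbinom_conv_qpoch)
  then show "fps_nth (q_egf q a * q_egf q c) n = fps_nth (q_egf q (\<lambda>n. \<Sum>k\<le>n. qbinom q n k * a k * c (n - k))) n"
    by (simp add: fps_mult_nth atLeast0AtMost sum_divide_distrib)
qed

lemma q_egf_compose_linear: "q_egf q a oo (fps_const c * fps_X) = q_egf q (\<lambda>n. c ^ n * a n)"
  by (simp add: fps_eq_iff)

lemma eq_fps_eq_q_egf: "eq_fps q c = q_egf q (\<lambda>n. c ^ n)"
  by (simp add: eq_fps_def q_egf_def)

lemma fps_compose_linear_linear: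
  "(F oo (fps_const c * fps_X)) oo (fps_const d * fps_X) = F oo (fps_const (c * d) * fps_X)"
  for F :: "'a::comm_ring_1 fps"
  by (simp add: fps_eq_iff power_mult_distrib)

lemma q_egf_F_rec_q_difference:
  fixes q b :: complex and W :: "nat \<Rightarrow> complex"
  assumes "norm q < 1"
  defines "G \<equiv> q_egf q (F_rec W q b)"
  shows "G - (G oo (fps_const q * fps_X)) =
    fps_X * (fps_const b * ((q_egf q W oo (fps_const q * fps_X)) * G))"
proof (rule fps_ext)
  fix n
  show "fps_nth (G - (G oo (fps_const q * fps_X))) n =
      fps_nth (fps_X * (fps_const b * ((q_egf q W oo (fps_const q * fps_X)) * G))) n"
  proof (cases n)
    case (Suc m)
    have "fps_nth (G - (G oo (fps_const q * fps_X))) n =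
        F_rec W q b (Suc m) / qpoch q (Suc m) - q ^ Suc m * (F_rec W q b (Suc m) / qpoch q (Suc m))"
      by (simp add: G_def Suc)
    also have "\<dots> = F_rec W q b (Suc m) / qpoch q m"
    proof -
      have cancel: "a / (p * d) - (1 - d) * (a / (p * d)) = a / p" if "p * d \<noteq> 0" for a p d :: complex
        using that by (simp add: field_simps)
      show ?thesis
        using cancel[of "qpoch q m" "1 - q ^ Suc m"] qpoch_nonzero[OF assms(1), of "Suc m"]
        by (simp add: qpoch_Suc del: F_rec.simps)
    qed
    also have "\<dots> = b * fps_nth (q_egf q (\<lambda>k. q ^ k * W k) * G) m"
      unfolding G_def q_egf_mult[OF assms(1)]
      by (simp add: sum_divide_distrib sum_distrib_left mult_ac)
    also have "\<dots> = fps_nth (fps_X * (fps_const b * ((q_egf q W oo (fps_const q * fps_X)) * G))) n"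
      by (simp add: Suc q_egf_compose_linear)
    finally show ?thesis .
  qed (simp add: G_def)
qed

lemma q_egf_A_rec_equation:
  assumes "norm q < 1" "x \<noteq> y"
  shows "(fps_const x - fps_const y * eq_fps q (x - y)) * q_egf q (A_rec q x y) = eq_fps q (x - y) - 1"
proof (rule fps_ext)
  fix n
  let ?c = "x - y" and ?A = "A_rec q x y"
  define T where "T = (\<Sum>i\<in>{1..<n}. qbinom q n i * ?c ^ (n - i) * ?A i)"
  have "(fps_const x - fps_const y * eq_fps q ?c) * q_egf q ?A =
      fps_const x * q_egf q ?A - fps_const y * (q_egf q ?A * eq_fps q ?c)"
    by (simp add: algebra_simps)
  then have lhs: "fps_nth ((fps_const x - fps_const y * eq_fps q ?c) * q_egf q ?A) n =
      (x * ?A n - y * (\<Sum>i\<le>n. qbinom q n i * ?A i * ?c ^ (n - i))) / qpoch q n"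
    by (simp add: eq_fps_eq_q_egf q_egf_mult[OF assms(1)] diff_divide_distrib)
  show "fps_nth ((fps_const x - fps_const y * eq_fps q ?c) * q_egf q ?A) n = fps_nth (eq_fps q ?c - 1) n"
  proof (cases n)
    case 0
    then show ?thesis
      by (simp add: lhs eq_fps_def)
  next
    case (Suc m)
    have "{..n} = insert 0 (insert n {1..<n})"
      using Suc by auto
    then have "(\<Sum>i\<le>n. qbinom q n i * ?A i * ?c ^ (n - i)) = ?A n + T"
      using Suc by (simp add: T_def mult_ac)
    moreover have "?A n = (?c ^ n + y * T) / ?c"
      unfolding T_def using Suc by (simp only: A_rec.simps)
    then have "?c * ?A n = ?c ^ n + y * T"
      using assms(2) by simp
    moreover have "fps_nth (eq_fps q ?c - 1) n = ?c ^ n / qpoch q n"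
      using Suc by (simp add: eq_fps_def)
    ultimately show ?thesis
      unfolding lhs by (simp add: algebra_simps)
  qed
qed

definition prod_num :: "complex \<Rightarrow> complex \<Rightarrow> complex \<Rightarrow> nat \<Rightarrow> complex fps" where
  "prod_num q x y k = 1 - fps_const (y / x) * eq_fps q ((x - y) * q ^ (k + 1))"

definition prod_den :: "complex \<Rightarrow> complex \<Rightarrow> complex \<Rightarrow> complex \<Rightarrow> complex \<Rightarrow> nat \<Rightarrow> complex fps" where
  "prod_den q x y z b k = 1 - fps_const (b * q ^ k * (z - y)) * fps_X
     - fps_const (y / x) * (1 + fps_const (b * q ^ k * (x - z)) * fps_X) * eq_fps q ((x - y) * q ^ (k + 1))"

lemma prod_factor_eq: "prod_factor q x y z b k = prod_num q x y k / prod_den q x y z b k"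
  unfolding prod_factor_def prod_num_def prod_den_def Let_def ..

lemma prod_den_nth_0: "x \<noteq> 0 \<Longrightarrow> x \<noteq> y \<Longrightarrow> fps_nth (prod_den q x y z b k) 0 \<noteq> 0"
  by (simp add: prod_den_def eq_fps_def field_simps)

lemma prod_factor_mult_den: "x \<noteq> 0 \<Longrightarrow> x \<noteq> y \<Longrightarrow> prod_factor q x y z b k * prod_den q x y z b k = prod_num q x y k"
  using prod_den_nth_0 by (simp add: prod_factor_eq fps_divide_unit inverse_mult_eq_1 mult.assoc)

lemma eq_fps_compose_linear: "eq_fps q a oo (fps_const c * fps_X) = eq_fps q (c * a)"
  by (simp add: fps_eq_iff eq_fps_def power_mult_distrib)

lemma fps_const_X_compose_linear:
  "(fps_const a * fps_X) oo (fps_const c * fps_X) = fps_const (a * c) * (fps_X :: 'a::idom fps)"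
  by (simp add: fps_compose_mult_distrib mult.assoc[symmetric])

lemma prod_num_compose_linear: "prod_num q x y 0 oo (fps_const (q ^ k) * fps_X) = prod_num q x y k"
  unfolding prod_num_def
  by (simp add: fps_compose_sub_distrib fps_compose_mult_distrib eq_fps_compose_linear) (simp add: mult_ac)

lemma prod_den_compose_linear: "prod_den q x y z b 0 oo (fps_const (q ^ k) * fps_X) = prod_den q x y z b k"
  unfolding prod_den_def
  by (simp add: fps_compose_sub_distrib fps_compose_add_distrib fps_compose_mult_distrib
      eq_fps_compose_linear fps_const_X_compose_linear) (simp add: mult_ac)

text \<open>With r = y / x, E = e_q((x - y) q u) and A evaluated at q u, this factors the denominator
  of the 0-th factor as its numerator times 1 - u \<beta> W(q u).\<close>

lemma den_factorization:
  fixes r xx yy zz bb X E A :: "'a::comm_ring_1"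
  assumes "r * xx = yy" "(xx - yy * E) * A = E - 1"
  shows "1 - bb * (zz - yy) * X - r * (1 + bb * (xx - zz) * X) * E =
    (1 - r * E) * (1 - X * bb * (zz + xx * yy * A))"
proof -
  have key: "(1 - r * E) * (xx * A) = E - 1"
    using assms by (simp add: algebra_simps)
  have "(1 - r * E) * (1 - X * bb * (zz + xx * yy * A)) =
      (1 - r * E) * (1 - X * bb * zz) - X * bb * yy * ((1 - r * E) * (xx * A))"
    by (simp add: algebra_simps)
  also have "\<dots> = (1 - r * E) * (1 - X * bb * zz) - X * bb * yy * (E - 1)"
    unfolding key ..
  also have "\<dots> = 1 - bb * (zz - yy) * X - r * (1 + bb * (xx - zz) * X) * E"
    by (simp add: algebra_simps flip: assms(1))
  finally show ?thesis ..
qed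

lemma q_egf_functional_equation:
  fixes q x y z b :: complex
  assumes "norm q < 1" "x \<noteq> 0" "x \<noteq> y"
  defines "G \<equiv> q_egf q (F_rec (block_sum q x y z) q b)"
  shows "prod_den q x y z b 0 * G = prod_num q x y 0 * (G oo (fps_const q * fps_X))"
proof -
  let ?C = "fps_const q * fps_X"
  let ?E = "eq_fps q ((x - y) * q ^ (0 + 1))"
  let ?A = "q_egf q (A_rec q x y) oo ?C"
  let ?W = "fps_const z + fps_const x * fps_const y * ?A"
  have "eq_fps q (x - y) oo ?C = ?E"
    by (simp add: eq_fps_compose_linear) (simp add: mult.commute)
  then have A_eq: "(fps_const x - fps_const y * ?E) * ?A = ?E - 1"
    using arg_cong[OF q_egf_A_rec_equation[OF assms(1,3)], of "\<lambda>F. F oo ?C"]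
    by (simp add: fps_compose_mult_distrib fps_compose_sub_distrib)
  have "q_egf q (block_sum q x y z) oo ?C = ?W"
    by (rule fps_ext) (simp add: q_egf_compose_linear block_sum_def)
  then have "G - (G oo ?C) = fps_X * (fps_const b * (?W * G))"
    using q_egf_F_rec_q_difference[OF assms(1), of "block_sum q x y z" b] by (simp only: G_def)
  then have G_shift: "G oo ?C = (1 - fps_X * fps_const b * ?W) * G"
    by (simp add: algebra_simps eq_diff_eq')
  have "prod_den q x y z b 0 = prod_num q x y 0 * (1 - fps_X * fps_const b * ?W)"
    unfolding prod_den_def prod_num_def
    using den_factorization[of "fps_const (y / x)" "fps_const x" "fps_const y" ?E ?A "fps_const b" "fps_const z" fps_X]
      A_eq assms(2) by simp
  then show ?thesis
    unfolding G_shift by (simp add: mult.assoc)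
qed

lemma q_egf_dilation_step:
  fixes q x y z b :: complex
  assumes "norm q < 1" "x \<noteq> 0" "x \<noteq> y"
  defines "G \<equiv> q_egf q (F_rec (block_sum q x y z) q b)"
  shows "G oo (fps_const (q ^ k) * fps_X) =
    prod_factor q x y z b k * (G oo (fps_const (q ^ Suc k) * fps_X))"
proof -
  let ?G = "\<lambda>k. G oo (fps_const (q ^ k) * fps_X)"
  have "(prod_den q x y z b 0 * G) oo (fps_const (q ^ k) * fps_X) =
      (prod_num q x y 0 * (G oo (fps_const q * fps_X))) oo (fps_const (q ^ k) * fps_X)"
    using q_egf_functional_equation[OF assms(1-3), of z b] by (simp only: G_def)
  then have "prod_den q x y z b k * ?G k = prod_num q x y k * ?G (Suc k)"
    by (simp add: fps_compose_mult_distrib prod_den_compose_linear prod_num_compose_linear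
        fps_compose_linear_linear)
  also have "\<dots> = prod_den q x y z b k * (prod_factor q x y z b k * ?G (Suc k))"
    using prod_factor_mult_den[OF assms(2,3)] by (simp add: mult_ac)
  finally show ?thesis
    using prod_den_nth_0[OF assms(2,3)] by (metis fps_nonzero_nth mult_left_cancel)
qed

lemma q_egf_eq_partial_product:
  fixes q x y z b :: complex
  assumes "norm q < 1" "x \<noteq> 0" "x \<noteq> y"
  defines "G \<equiv> q_egf q (F_rec (block_sum q x y z) q b)"
  shows "G = (\<Prod>k<K. prod_factor q x y z b k) * (G oo (fps_const (q ^ K) * fps_X))"
proof (induction K)
  case (Suc K)
  then show ?case
    using q_egf_dilation_step[OF assms(1-3), where k = K] by (simp add: G_def mult.assoc)
qed simp

lemma fps_nth_tendsto_of_dilation_factorization: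
  fixes G :: "'a::real_normed_field fps" and P :: "nat \<Rightarrow> 'a fps"
  assumes q: "norm q < 1" and G0: "fps_nth G 0 = 1"
    and factor: "\<And>K. G = P K * (G oo (fps_const (q ^ K) * fps_X))"
  shows "(\<lambda>K. fps_nth (P K) n) \<longlonglongrightarrow> fps_nth G n"
proof (induction n rule: less_induct)
  case (less n)
  let ?g = "fps_nth G"
  let ?R = "\<lambda>K. \<Sum>i<n. fps_nth (P K) i * ((q ^ (n - i)) ^ K * ?g (n - i))"
  have decomp: "fps_nth (P K) n = ?g n - ?R K" for K
  proof -
    have "?g n = (\<Sum>i\<le>n. fps_nth (P K) i * ((q ^ K) ^ (n - i) * ?g (n - i)))"
      by (subst factor[of K]) (simp add: fps_mult_nth atLeast0AtMost)
    also have "\<dots> = ?R K + fps_nth (P K) n"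
      by (simp add: lessThan_Suc_atMost[symmetric] G0 mult.commute[of K] flip: power_mult)
    finally show ?thesis
      by simp
  qed
  have "?R \<longlonglongrightarrow> (\<Sum>i<n. ?g i * (0 * ?g (n - i)))"
  proof (intro tendsto_sum tendsto_mult tendsto_const)
    fix i assume "i \<in> {..<n}"
    then show "(\<lambda>K. fps_nth (P K) i) \<longlonglongrightarrow> ?g i"
      using less by simp
    have "norm (q ^ (n - i)) < 1"
      using q \<open>i \<in> {..<n}\<close> by (simp add: norm_power power_less_one_iff)
    then show "(\<lambda>K. (q ^ (n - i)) ^ K) \<longlonglongrightarrow> 0"
      by (rule LIMSEQ_power_zero)
  qed
  then have "(\<lambda>K. ?g n - ?R K) \<longlonglongrightarrow> ?g n - 0"
    by (intro tendsto_diff tendsto_const) simp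
  then show ?case
    by (simp add: decomp)
qed

theorem theorem5p2:
  fixes q x y z b :: complex and n :: nat
  assumes "norm q < 1" and "x \<noteq> 0" and "x \<noteq> y"
  shows "(\<lambda>K. fps_nth (\<Prod>k<K. prod_factor q x y z b k) n) \<longlonglongrightarrow> Finv q x y z b n / qpoch q n"
proof -
  let ?G = "q_egf q (F_rec (block_sum q x y z) q b)"
  have "Finv q x y z b n = F_rec (block_sum q x y z) q b n"
    using assms(3) by (rule Finv_eq_F_rec)
  moreover have "(\<lambda>K. fps_nth (\<Prod>k<K. prod_factor q x y z b k) n) \<longlonglongrightarrow> fps_nth ?G n"
    using assms(1) by (rule fps_nth_tendsto_of_dilation_factorization)
      (simp_all add: q_egf_eq_partial_product[OF assms])
  ultimately show ?thesis
    by simp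
qed

end
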